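(* Let $C_5$ be the $5$-cycle (pentagon) and $I(C_5)$ its edge ideal in a polynomial ring in five variables over a field. Then $I(C_5)^q$ has linear quotients for every $q\ge 2$.
   Context: The edge ideal of a graph is generated by the products $x_ix_j$ of variables corresponding to its edges $\{i,j\}$. A monomial ideal generated in a single degree has linear quotients if its minimal monomial generators can be ordered $u_1>\cdots>u_r$ so that each colon ideal $(u_1,\ldots,u_i):u_{i+1}$, $1\le i<r$, is generated by a subset of the variables. *)

theory Defs
  imports "HOL-Library.Poly_Mapping" "HOL-Library.Numeral_Type"
begin

type_synonym 'k poly5 = "(5 \<Rightarrow>\<^sub>0 nat) \<Rightarrow>\<^sub>0 'k"

definition monom :: "(5 \<Rightarrow>\<^sub>0 nat) \<Rightarrow> 'k::field poly5" where
  "monom \<alpha> = Poly_Mapping.single \<alpha> 1"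

definition var :: "5 \<Rightarrow> 'k::field poly5" where
  "var i = monom (Poly_Mapping.single i 1)"

definition ideal_gen :: "'a::comm_ring_1 set \<Rightarrow> 'a set" where
  "ideal_gen S = {x. \<exists>F c. finite F \<and> F \<subseteq> S \<and> x = (\<Sum>s\<in>F. c s * s)}"

definition ideal_pow :: "'a::comm_ring_1 set \<Rightarrow> nat \<Rightarrow> 'a set" where
  "ideal_pow I q = ideal_gen {prod_list xs | xs. length xs = q \<and> set xs \<subseteq> I}"

definition colon :: "'a::comm_ring_1 set \<Rightarrow> 'a \<Rightarrow> 'a set" where
  "colon I g = {f. f * g \<in> I}"

definition edge_ideal_C5 :: "'k::field poly5 set" where
  "edge_ideal_C5 = ideal_gen {var i * var (i + 1) | i. True}"

definition min_mon_gens :: "'k::field poly5 set \<Rightarrow> (5 \<Rightarrow>\<^sub>0 nat) set" where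
  "min_mon_gens I = {\<alpha>. monom \<alpha> \<in> I \<and>
      (\<forall>\<beta> \<gamma>. \<alpha> = \<beta> + \<gamma> \<and> \<gamma> \<noteq> 0 \<longrightarrow> monom \<beta> \<notin> I)}"

definition has_linear_quotients :: "'k::field poly5 set \<Rightarrow> bool" where
  "has_linear_quotients I \<longleftrightarrow>
    (\<exists>us. distinct us \<and> set us = min_mon_gens I \<and>
      (\<forall>i. 1 \<le> i \<and> i < length us \<longrightarrow>
         (\<exists>V. colon (ideal_gen (monom ` set (take i us)) :: 'k poly5 set) (monom (us ! i))
               = ideal_gen (var ` V))))"

end

theory Submission
  imports Defs "HOL-Library.Product_Lexorder" "HOL-Library.Function_Algebras"
begin

text \<open>
  The generators of \<open>I(C\<^sub>5)\<^sup>q\<close> are the monomials \<open>x\<^sup>a\<close> whose exponent vectors are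
  the lattice points of the polytope \<open>a \<ge> 0\<close>, \<open>|a| = 2q\<close>, \<open>a\<^sub>i + a\<^sub>i\<^sub>+\<^sub>2 \<le> q\<close>:
  an edge never covers both of two non-adjacent vertices, and conversely an edge can always
  be split off such a point. They all have degree \<open>2q\<close>, so they are the minimal generators.
  For monomial ideals, linear quotients follow from an exchange property of an ordering
  of the generators: whenever \<open>a\<close> precedes \<open>u\<close> there is a variable \<open>x\<^sub>v\<close> with
  \<open>u\<^sub>v < a\<^sub>v\<close> and a generator preceding \<open>u\<close> that divides \<open>x\<^sub>v u\<close>.
  For a suitable order the earlier generator can always be taken to be \<open>x\<^sub>v u / x\<^sub>w\<close>,
  and checking this is a finite case analysis on the linear constraints, valid once \<open>q \<ge> 2\<close>.
\<close>

section \<open>Ideals generated by a set\<close>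

lemma ideal_genI: "finite F \<Longrightarrow> F \<subseteq> S \<Longrightarrow> (\<Sum>s\<in>F. c s * s) \<in> ideal_gen S"
  unfolding ideal_gen_def by blast

lemma ideal_genE:
  assumes "x \<in> ideal_gen S"
  obtains F c where "finite F" "F \<subseteq> S" "x = (\<Sum>s\<in>F. c s * s)"
  using assms unfolding ideal_gen_def by blast

lemma ideal_gen_0: "0 \<in> ideal_gen S"
  using ideal_genI[of "{}"] by simp

lemma ideal_gen_base: "s \<in> S \<Longrightarrow> s \<in> ideal_gen S"
  using ideal_genI[of "{s}" S "\<lambda>_. 1"] by simp

lemma ideal_gen_add:
  assumes "x \<in> ideal_gen S" "y \<in> ideal_gen S"
  shows "x + y \<in> ideal_gen S"
proof -
  obtain F c where F: "finite F" "F \<subseteq> S" "x = (\<Sum>s\<in>F. c s * s)"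
    using assms(1) by (rule ideal_genE)
  obtain G d where G: "finite G" "G \<subseteq> S" "y = (\<Sum>s\<in>G. d s * s)"
    using assms(2) by (rule ideal_genE)
  define c' where "c' s = (if s \<in> F then c s else 0)" for s
  define d' where "d' s = (if s \<in> G then d s else 0)" for s
  have "x = (\<Sum>s\<in>F \<union> G. c' s * s)"
    unfolding F(3) c'_def using F(1) G(1) by (intro sum.mono_neutral_cong_left) auto
  moreover have "y = (\<Sum>s\<in>F \<union> G. d' s * s)"
    unfolding G(3) d'_def using F(1) G(1) by (intro sum.mono_neutral_cong_left) auto
  ultimately have "x + y = (\<Sum>s\<in>F \<union> G. (c' s + d' s) * s)"
    by (simp add: sum.distrib distrib_right)
  also have "\<dots> \<in> ideal_gen S"
    using F G by (intro ideal_genI) auto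
  finally show ?thesis .
qed

lemma ideal_gen_mult_left:
  assumes "x \<in> ideal_gen S"
  shows "r * x \<in> ideal_gen S"
proof -
  obtain F c where F: "finite F" "F \<subseteq> S" "x = (\<Sum>s\<in>F. c s * s)"
    using assms by (rule ideal_genE)
  have "r * x = (\<Sum>s\<in>F. (r * c s) * s)"
    unfolding F(3) by (simp add: sum_distrib_left mult.assoc)
  also have "\<dots> \<in> ideal_gen S"
    using F by (intro ideal_genI)
  finally show ?thesis .
qed

lemma ideal_gen_sum:
  "finite A \<Longrightarrow> (\<And>i. i \<in> A \<Longrightarrow> f i \<in> ideal_gen S) \<Longrightarrow> sum f A \<in> ideal_gen S"
  by (induction A rule: finite_induct) (auto intro: ideal_gen_0 ideal_gen_add)

lemma ideal_gen_subset:
  assumes "S \<subseteq> ideal_gen T"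
  shows "ideal_gen S \<subseteq> ideal_gen T"
proof
  fix x assume "x \<in> ideal_gen S"
  then obtain F c where F: "finite F" "F \<subseteq> S" "x = (\<Sum>s\<in>F. c s * s)"
    by (rule ideal_genE)
  show "x \<in> ideal_gen T"
    unfolding F(3) using F assms by (intro ideal_gen_sum ideal_gen_mult_left) auto
qed

lemma ideal_gen_mult:
  assumes "x \<in> ideal_gen S" "y \<in> ideal_gen T"
  shows "x * y \<in> ideal_gen {s * t | s t. s \<in> S \<and> t \<in> T}"
proof -
  obtain F c where F: "finite F" "F \<subseteq> S" "x = (\<Sum>s\<in>F. c s * s)"
    using assms(1) by (rule ideal_genE)
  obtain G d where G: "finite G" "G \<subseteq> T" "y = (\<Sum>t\<in>G. d t * t)"
    using assms(2) by (rule ideal_genE)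
  have "x * y = (\<Sum>s\<in>F. \<Sum>t\<in>G. (c s * d t) * (s * t))"
    unfolding F(3) G(3) sum_product by (simp add: ac_simps)
  also have "\<dots> \<in> ideal_gen {s * t | s t. s \<in> S \<and> t \<in> T}"
    using F G by (intro ideal_gen_sum ideal_gen_mult_left ideal_gen_base) auto
  finally show ?thesis .
qed

section \<open>Monomial ideals\<close>

lemma monom_mult: "(monom a :: 'k::field poly5) * monom b = monom (a + b)"
  unfolding monom_def by (simp add: mult_single)

lemma monom_0: "(monom 0 :: 'k::field poly5) = 1"
  unfolding monom_def by simp

lemma keys_monom [simp]: "Poly_Mapping.keys (monom a :: 'k::field poly5) = {a}"
  unfolding monom_def by simp

lemma poly_mapping_expansion:
  "f = (\<Sum>m\<in>Poly_Mapping.keys f. Poly_Mapping.single m (Poly_Mapping.lookup f m))"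
proof (rule poly_mapping_eqI)
  fix k
  have "Poly_Mapping.lookup
          (\<Sum>m\<in>Poly_Mapping.keys f. Poly_Mapping.single m (Poly_Mapping.lookup f m)) k
      = (\<Sum>m\<in>Poly_Mapping.keys f. (Poly_Mapping.lookup f m when m = k))"
    by (simp add: lookup_sum lookup_single)
  also have "\<dots> = Poly_Mapping.lookup f k"
    by (cases "k \<in> Poly_Mapping.keys f") (simp_all add: when_def in_keys_iff)
  finally show "Poly_Mapping.lookup f k = Poly_Mapping.lookup
      (\<Sum>m\<in>Poly_Mapping.keys f. Poly_Mapping.single m (Poly_Mapping.lookup f m)) k" ..
qed

lemma diff_add_if_lookup_le:
  "Poly_Mapping.lookup a \<le> Poly_Mapping.lookup (b :: 'v \<Rightarrow>\<^sub>0 nat) \<Longrightarrow> b - a + a = b"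
  by (intro poly_mapping_eqI) (simp add: lookup_add lookup_minus le_fun_def)

lemma lookup_mult_monom:
  "Poly_Mapping.lookup (f * (monom u :: 'k::field poly5)) (m + u) = Poly_Mapping.lookup f m"
proof -
  have "f * monom u = (\<Sum>k\<in>Poly_Mapping.keys f.
          Poly_Mapping.single (k + u) (Poly_Mapping.lookup f k))"
    by (subst poly_mapping_expansion) (simp add: sum_distrib_right monom_def mult_single)
  then have "Poly_Mapping.lookup (f * monom u) (m + u)
      = (\<Sum>k\<in>Poly_Mapping.keys f. (Poly_Mapping.lookup f k when k = m))"
    by (simp add: lookup_sum lookup_single)
  also have "\<dots> = Poly_Mapping.lookup f m"
    by (cases "m \<in> Poly_Mapping.keys f") (simp_all add: when_def in_keys_iff)
  finally show ?thesis .
qed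

lemma mem_monomial_ideal_iff:
  "f \<in> ideal_gen ((monom :: _ \<Rightarrow> 'k::field poly5) ` A) \<longleftrightarrow>
     (\<forall>m\<in>Poly_Mapping.keys f. \<exists>a\<in>A. Poly_Mapping.lookup a \<le> Poly_Mapping.lookup m)"
proof
  assume "f \<in> ideal_gen (monom ` A)"
  then obtain F c where F: "finite F" "F \<subseteq> monom ` A" "f = (\<Sum>s\<in>F. c s * s)"
    by (rule ideal_genE)
  show "\<forall>m\<in>Poly_Mapping.keys f. \<exists>a\<in>A. Poly_Mapping.lookup a \<le> Poly_Mapping.lookup m"
  proof
    fix m assume "m \<in> Poly_Mapping.keys f"
    then have "m \<in> (\<Union>s\<in>F. Poly_Mapping.keys (c s * s))"
      using keys_sum[of "\<lambda>s. c s * s" F] F(3) by (simp add: subset_iff)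
    then obtain s where s: "s \<in> F" "m \<in> Poly_Mapping.keys (c s * s)"
      by blast
    obtain a where a: "a \<in> A" "s = monom a"
      using F(2) s(1) by blast
    have "m \<in> {k + l |k l. k \<in> Poly_Mapping.keys (c s) \<and> l \<in> Poly_Mapping.keys s}"
      using keys_mult s(2) by (rule subsetD)
    then obtain k where "m = k + a"
      using a(2) by auto
    then have "Poly_Mapping.lookup a \<le> Poly_Mapping.lookup m"
      by (simp add: le_fun_def lookup_add)
    with a(1) show "\<exists>a\<in>A. Poly_Mapping.lookup a \<le> Poly_Mapping.lookup m" ..
  qed
next
  assume divisible: "\<forall>m\<in>Poly_Mapping.keys f. \<exists>a\<in>A. Poly_Mapping.lookup a \<le> Poly_Mapping.lookup m"
  have term_mem: "Poly_Mapping.single m (Poly_Mapping.lookup f m) \<in> ideal_gen (monom ` A)"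
    if "m \<in> Poly_Mapping.keys f" for m
  proof -
    from divisible \<open>m \<in> Poly_Mapping.keys f\<close>
    obtain a where a: "a \<in> A" "Poly_Mapping.lookup a \<le> Poly_Mapping.lookup m"
      by blast
    have "Poly_Mapping.single m (Poly_Mapping.lookup f m)
        = Poly_Mapping.single (m - a) (Poly_Mapping.lookup f m) * monom a"
      by (simp add: monom_def mult_single diff_add_if_lookup_le[OF a(2)])
    also have "\<dots> \<in> ideal_gen (monom ` A)"
      using a(1) by (intro ideal_gen_mult_left ideal_gen_base) simp
    finally show ?thesis .
  qed
  have "f = (\<Sum>m\<in>Poly_Mapping.keys f. Poly_Mapping.single m (Poly_Mapping.lookup f m))"
    by (rule poly_mapping_expansion)
  also have "\<dots> \<in> ideal_gen (monom ` A)"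
    using term_mem by (intro ideal_gen_sum) simp_all
  finally show "f \<in> ideal_gen (monom ` A)" .
qed

lemma monom_mem_monomial_ideal_iff:
  "(monom b :: 'k::field poly5) \<in> ideal_gen (monom ` A) \<longleftrightarrow>
     (\<exists>a\<in>A. Poly_Mapping.lookup a \<le> Poly_Mapping.lookup b)"
  by (simp add: mem_monomial_ideal_iff)

lemma colon_monomial_ideal:
  assumes "\<And>p. p \<in> P \<Longrightarrow> \<exists>v. Poly_Mapping.lookup u v < Poly_Mapping.lookup p v \<and>
      (\<exists>b\<in>P. Poly_Mapping.lookup b \<le> Poly_Mapping.lookup (u + Poly_Mapping.single v 1))"
  shows "colon (ideal_gen ((monom :: _ \<Rightarrow> 'k::field poly5) ` P)) (monom u)
       = ideal_gen (var ` {v. \<exists>b\<in>P.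
           Poly_Mapping.lookup b \<le> Poly_Mapping.lookup (u + Poly_Mapping.single v 1)})"
    (is "_ = ideal_gen (var ` ?V)")
proof (intro set_eqI iffI)
  have var_V: "(var ` ?V :: 'k poly5 set) = monom ` ((\<lambda>v. Poly_Mapping.single v 1) ` ?V)"
    by (auto simp: var_def)
  fix f :: "'k poly5"
  assume "f \<in> colon (ideal_gen (monom ` P)) (monom u)"
  then have fu: "f * monom u \<in> ideal_gen (monom ` P)"
    unfolding colon_def by simp
  show "f \<in> ideal_gen (var ` ?V)"
    unfolding var_V mem_monomial_ideal_iff
  proof
    fix m assume "m \<in> Poly_Mapping.keys f"
    then have "m + u \<in> Poly_Mapping.keys (f * monom u)"
      by (simp add: in_keys_iff lookup_mult_monom)
    then obtain p where p: "p \<in> P" "Poly_Mapping.lookup p \<le> Poly_Mapping.lookup (m + u)"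
      using fu unfolding mem_monomial_ideal_iff by blast
    then obtain v where v: "Poly_Mapping.lookup u v < Poly_Mapping.lookup p v" "v \<in> ?V"
      using assms by blast
    have "Poly_Mapping.lookup p v \<le> Poly_Mapping.lookup m v + Poly_Mapping.lookup u v"
      using p(2) by (simp add: le_fun_def lookup_add)
    with v(1) have "Poly_Mapping.lookup (Poly_Mapping.single v 1) \<le> Poly_Mapping.lookup m"
      by (simp add: le_fun_def lookup_single when_def)
    with v(2) show "\<exists>a\<in>(\<lambda>v. Poly_Mapping.single v 1) ` ?V.
        Poly_Mapping.lookup a \<le> Poly_Mapping.lookup m"
      by blast
  qed
next
  fix f :: "'k poly5"
  assume "f \<in> ideal_gen (var ` ?V)"
  then obtain F c where F: "finite F" "F \<subseteq> var ` ?V" "f = (\<Sum>s\<in>F. c s * s)"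
    by (rule ideal_genE)
  have shifted: "s * monom u \<in> ideal_gen (monom ` P)" if "s \<in> F" for s
  proof -
    obtain v b where "s = var v" "b \<in> P"
      "Poly_Mapping.lookup b \<le> Poly_Mapping.lookup (u + Poly_Mapping.single v 1)"
      using F(2) \<open>s \<in> F\<close> by blast
    then show ?thesis
      by (auto simp: var_def monom_mult monom_mem_monomial_ideal_iff add.commute)
  qed
  then have "(\<Sum>s\<in>F. c s * (s * monom u)) \<in> ideal_gen (monom ` P)"
    using F(1) by (intro ideal_gen_sum ideal_gen_mult_left[OF shifted])
  then show "f \<in> colon (ideal_gen (monom ` P)) (monom u)"
    unfolding colon_def F(3) by (simp add: sum_distrib_right mult.assoc)
qed

lemma min_mon_gens_monomial_ideal:
  assumes antichain: "\<And>g h. g \<in> G \<Longrightarrow> h \<in> G \<Longrightarrow>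
    Poly_Mapping.lookup g \<le> Poly_Mapping.lookup h \<Longrightarrow> g = h"
  shows "min_mon_gens (ideal_gen ((monom :: _ \<Rightarrow> 'k::field poly5) ` G)) = G"
proof (intro set_eqI iffI)
  fix a assume a: "a \<in> min_mon_gens (ideal_gen ((monom :: _ \<Rightarrow> 'k poly5) ` G))"
  then obtain g where g: "g \<in> G" "Poly_Mapping.lookup g \<le> Poly_Mapping.lookup a"
    unfolding min_mon_gens_def monom_mem_monomial_ideal_iff by blast
  have "a = g + (a - g)"
    using diff_add_if_lookup_le[OF g(2)] by (simp add: add.commute)
  with a g(1) have "a - g = 0"
    unfolding min_mon_gens_def monom_mem_monomial_ideal_iff by blast
  with \<open>a = g + (a - g)\<close> g(1) show "a \<in> G"
    by simp
next
  fix a assume a: "a \<in> G"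
  have "\<not> Poly_Mapping.lookup g \<le> Poly_Mapping.lookup b"
    if "g \<in> G" "a = b + c" "c \<noteq> 0" for g b c
  proof
    assume "Poly_Mapping.lookup g \<le> Poly_Mapping.lookup b"
    also have "Poly_Mapping.lookup b \<le> Poly_Mapping.lookup a"
      using \<open>a = b + c\<close> by (simp add: le_fun_def lookup_add)
    finally have "g = a"
      using antichain a that(1) by blast
    with \<open>Poly_Mapping.lookup g \<le> Poly_Mapping.lookup b\<close> \<open>a = b + c\<close>
    have "Poly_Mapping.lookup b k + Poly_Mapping.lookup c k \<le> Poly_Mapping.lookup b k" for k
      by (simp add: le_fun_def lookup_add)
    then have "c = 0"
      by (intro poly_mapping_eqI) simp
    with \<open>c \<noteq> 0\<close> show False ..
  qed
  then show "a \<in> min_mon_gens (ideal_gen ((monom :: _ \<Rightarrow> 'k poly5) ` G))"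
    unfolding min_mon_gens_def monom_mem_monomial_ideal_iff using a by blast
qed

lemma set_take_sorted_wrt_key:
  fixes key :: "'a \<Rightarrow> 'b::linorder"
  assumes "sorted_wrt (\<lambda>x y. key x < key y) us" "i < length us"
  shows "set (take i us) = {g \<in> set us. key g < key (us ! i)}"
proof (intro set_eqI iffI)
  fix g assume "g \<in> set (take i us)"
  then obtain j where "j < i" "g = us ! j"
    using assms(2) by (auto simp: in_set_conv_nth)
  then show "g \<in> {g \<in> set us. key g < key (us ! i)}"
    using assms sorted_wrt_nth_less by fastforce
next
  fix g assume g: "g \<in> {g \<in> set us. key g < key (us ! i)}"
  then obtain j where j: "j < length us" "g = us ! j"
    by (auto simp: in_set_conv_nth)
  have "j < i"
  proof (rule ccontr)
    assume "\<not> j < i"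
    then have "key (us ! i) \<le> key g"
      using j assms(1) sorted_wrt_nth_less[OF assms(1), of i j] by (cases "i = j") auto
    with g show False
      by (auto dest: leD)
  qed
  with j assms(2) show "g \<in> set (take i us)"
    by (auto simp: in_set_conv_nth)
qed

lemma has_linear_quotients_if_exchange:
  fixes I :: "'k::field poly5 set" and key :: "(5 \<Rightarrow>\<^sub>0 nat) \<Rightarrow> 'a::linorder"
  assumes gens: "min_mon_gens I = G" and "finite G" and "inj_on key G"
    and exchange: "\<And>a u. a \<in> G \<Longrightarrow> u \<in> G \<Longrightarrow> key a < key u \<Longrightarrow>
      \<exists>v. Poly_Mapping.lookup u v < Poly_Mapping.lookup a v \<and>
        (\<exists>b\<in>G. key b < key u \<and>
           Poly_Mapping.lookup b \<le> Poly_Mapping.lookup (u + Poly_Mapping.single v 1))"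
  shows "has_linear_quotients I"
proof -
  obtain xs where xs: "set xs = G" "distinct xs"
    using finite_distinct_list[OF \<open>finite G\<close>] by blast
  define us where "us = sort_key key xs"
  have set_us: "set us = G" and "distinct us"
    unfolding us_def using xs by simp_all
  have "sorted_wrt (<) (map key us)"
    unfolding strict_sorted_iff us_def
    using xs \<open>inj_on key G\<close> by (simp add: distinct_map)
  then have sorted: "sorted_wrt (\<lambda>x y. key x < key y) us"
    by (simp add: sorted_wrt_map)
  have "\<exists>V. colon (ideal_gen (monom ` set (take i us))) (monom (us ! i)) = ideal_gen (var ` V)"
    if "i < length us" for i
  proof -
    have u: "us ! i \<in> G"
      using that set_us nth_mem by blast
    have prefix: "set (take i us) = {g \<in> G. key g < key (us ! i)}"
      using set_take_sorted_wrt_key[OF sorted that] set_us by simp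
    show ?thesis
      unfolding prefix by (rule exI, rule colon_monomial_ideal) (use exchange[OF _ u] in blast)
  qed
  with \<open>distinct us\<close> set_us gens show ?thesis
    unfolding has_linear_quotients_def by blast
qed

section \<open>Powers of the edge ideal of the pentagon\<close>

lemma UNIV_5: "(UNIV :: 5 set) = {0, 1, 2, 3, 4}"
proof -
  have "(i::5) \<in> {0, 1, 2, 3, 4}" for i
  proof (cases i)
    case (of_int z)
    then have "z = 0 \<or> z = 1 \<or> z = 2 \<or> z = 3 \<or> z = 4"
      by auto
    then show ?thesis
      using of_int by auto
  qed
  then show ?thesis
    by blast
qed

lemma ex_5: "(\<exists>i::5. P i) \<longleftrightarrow> P 0 \<or> P 1 \<or> P 2 \<or> P 3 \<or> P 4"
  by (metis UNIV_5 UNIV_I insertE empty_iff)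

lemma all_5: "(\<forall>i::5. P i) \<longleftrightarrow> P 0 \<and> P 1 \<and> P 2 \<and> P 3 \<and> P 4"
  by (metis UNIV_5 UNIV_I insertE empty_iff)

lemma numeral_5_wrap: "(5::5) = 0" "(6::5) = 1"
  by simp_all

definition unit_vec :: "5 \<Rightarrow> 5 \<Rightarrow> int" where
  "unit_vec v = (\<lambda>i. of_bool (i = v))"

definition edge_vec :: "5 \<Rightarrow> 5 \<Rightarrow> int" where
  "edge_vec j = unit_vec j + unit_vec (j + 1)"

definition polytope_point :: "int \<Rightarrow> (5 \<Rightarrow> int) \<Rightarrow> bool" where
  "polytope_point q x \<longleftrightarrow> (\<forall>i. 0 \<le> x i \<and> x i + x (i + 2) \<le> q) \<and> sum x UNIV = 2 * q"

lemma polytope_point_iff: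
  "polytope_point q x \<longleftrightarrow>
     0 \<le> x 0 \<and> 0 \<le> x 1 \<and> 0 \<le> x 2 \<and> 0 \<le> x 3 \<and> 0 \<le> x 4 \<and>
     x 0 + x 2 \<le> q \<and> x 1 + x 3 \<le> q \<and> x 2 + x 4 \<le> q \<and> x 3 + x 0 \<le> q \<and> x 4 + x 1 \<le> q \<and>
     x 0 + x 1 + x 2 + x 3 + x 4 = 2 * q"
  unfolding polytope_point_def all_5 UNIV_5 by (auto simp: algebra_simps numeral_5_wrap)

lemma polytope_point_add_edge: "polytope_point q x \<Longrightarrow> polytope_point (q + 1) (x + edge_vec j)"
  using UNIV_5 unfolding polytope_point_iff edge_vec_def unit_vec_def
  by (cases "j \<in> {0, 1, 2, 3, 4}") (auto simp: numeral_5_wrap)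

lemma polytope_point_remove_edge:
  assumes "0 \<le> q" "polytope_point (q + 1) x"
  shows "\<exists>j. polytope_point q (x - edge_vec j)"
  using assms unfolding ex_5 polytope_point_iff edge_vec_def unit_vec_def
  by (simp add: numeral_5_wrap) smt

lemma polytope_point_0_iff: "polytope_point 0 x \<longleftrightarrow> x = 0"
proof
  assume "polytope_point 0 x"
  then have bounds: "0 \<le> x i \<and> 0 \<le> x (i + 2) \<and> x i + x (i + 2) \<le> 0" for i
    unfolding polytope_point_def by auto
  have "x i = 0" for i
    using bounds[of i] by linarith
  then show "x = 0"
    by (simp add: fun_eq_iff)
qed (simp add: polytope_point_def)

lemma polytope_point_antichain:
  assumes "polytope_point q x" "polytope_point q y" "x \<le> y"
  shows "x = y"
proof -
  have "sum (y - x) UNIV = 0"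
    using assms(1,2) unfolding polytope_point_def by (simp add: sum_subtractf)
  then have "\<forall>i. (y - x) i = 0"
    using assms(3) by (subst (asm) sum_nonneg_eq_0_iff) (auto simp: le_fun_def)
  then show ?thesis
    by (auto simp: fun_eq_iff)
qed

text \<open>
  The last coordinate is determined by the degree. The boolean component is essential:
  no plain lexicographic order of the generators has the exchange property.
\<close>
definition order_key :: "int \<Rightarrow> (5 \<Rightarrow> int) \<Rightarrow> int \<times> bool \<times> int \<times> int \<times> int" where
  "order_key q x = (- x 0, x 0 + x 2 = q \<and> x 0 + x 3 = q, x 1, x 2, x 3)"

lemma inj_on_order_key: "inj_on (order_key q) {x. polytope_point q x}"
proof
  fix x y
  assume "x \<in> {x. polytope_point q x}" "y \<in> {x. polytope_point q x}"
    and "order_key q x = order_key q y"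
  then show "x = y"
    unfolding order_key_def polytope_point_iff by (auto simp: fun_eq_iff all_5)
qed

text \<open>This fails for \<open>q = 1\<close>: \<open>I(C\<^sub>5)\<close> itself does not have linear quotients.\<close>
lemma polytope_point_exchange:
  assumes "2 \<le> q" "polytope_point q x" "polytope_point q y" "order_key q x < order_key q y"
  shows "\<exists>v w. y v < x v \<and> polytope_point q (y + unit_vec v - unit_vec w) \<and>
           order_key q (y + unit_vec v - unit_vec w) < order_key q y"
  using assms unfolding ex_5 polytope_point_iff order_key_def unit_vec_def
  by simp smt

definition ivec :: "(5 \<Rightarrow>\<^sub>0 nat) \<Rightarrow> 5 \<Rightarrow> int" where
  "ivec a i = int (Poly_Mapping.lookup a i)"

lemma ivec_0: "ivec 0 = 0"
  by (simp add: fun_eq_iff ivec_def)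

lemma ivec_add: "ivec (a + b) = ivec a + ivec b"
  by (simp add: fun_eq_iff ivec_def lookup_add)

lemma ivec_single: "ivec (Poly_Mapping.single v 1) = unit_vec v"
  by (simp add: fun_eq_iff ivec_def unit_vec_def lookup_single)

lemma ivec_le_iff: "ivec a \<le> ivec b \<longleftrightarrow> Poly_Mapping.lookup a \<le> Poly_Mapping.lookup b"
  by (simp add: le_fun_def ivec_def)

lemma ivec_diff: "ivec b \<le> ivec a \<Longrightarrow> ivec (a - b) = ivec a - ivec b"
  by (simp add: fun_eq_iff le_fun_def ivec_def lookup_minus)

lemma ivec_eq_iff: "ivec a = ivec b \<longleftrightarrow> a = b"
  by (auto simp: fun_eq_iff ivec_def poly_mapping_eqI)

definition edge_exp :: "5 \<Rightarrow> 5 \<Rightarrow>\<^sub>0 nat" where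
  "edge_exp j = Poly_Mapping.single j 1 + Poly_Mapping.single (j + 1) 1"

lemma ivec_edge_exp: "ivec (edge_exp j) = edge_vec j"
  unfolding edge_exp_def edge_vec_def ivec_add ivec_single ..

primrec edge_power_exps :: "nat \<Rightarrow> (5 \<Rightarrow>\<^sub>0 nat) set" where
  "edge_power_exps 0 = {0}"
| "edge_power_exps (Suc q) = {edge_exp j + g | j g. g \<in> edge_power_exps q}"

lemma finite_edge_power_exps: "finite (edge_power_exps q)"
proof (induction q)
  case (Suc q)
  have "edge_power_exps (Suc q) = (\<lambda>(j, g). edge_exp j + g) ` (UNIV \<times> edge_power_exps q)"
    by auto
  with Suc show ?case
    by simp
qed simp

lemma edge_power_exps_eq: "edge_power_exps q = {g. polytope_point (int q) (ivec g)}"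
proof (induction q)
  case 0
  show ?case
    by (auto simp: polytope_point_0_iff ivec_0 ivec_eq_iff[of _ 0, simplified ivec_0])
next
  case (Suc q)
  show ?case
  proof (intro set_eqI iffI)
    fix g assume "g \<in> edge_power_exps (Suc q)"
    then obtain j h where "g = edge_exp j + h" "polytope_point (int q) (ivec h)"
      using Suc by auto
    then show "g \<in> {g. polytope_point (int (Suc q)) (ivec g)}"
      using polytope_point_add_edge[of "int q" "ivec h" j]
      by (simp add: ivec_add ivec_edge_exp add.commute)
  next
    fix g assume "g \<in> {g. polytope_point (int (Suc q)) (ivec g)}"
    then have "polytope_point (int q + 1) (ivec g)"
      by (simp add: add.commute)
    then obtain j where j: "polytope_point (int q) (ivec g - edge_vec j)"
      using polytope_point_remove_edge by (metis of_nat_0_le_iff)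
    then have le: "ivec (edge_exp j) \<le> ivec g"
      by (auto simp: polytope_point_def le_fun_def ivec_edge_exp)
    with j have "g - edge_exp j \<in> edge_power_exps q"
      using Suc by (simp add: ivec_diff ivec_edge_exp)
    moreover have "g = edge_exp j + (g - edge_exp j)"
      using diff_add_if_lookup_le[of "edge_exp j" g] le by (simp add: ivec_le_iff add.commute)
    ultimately show "g \<in> edge_power_exps (Suc q)"
      by auto
  qed
qed

lemma edge_ideal_C5_eq: "(edge_ideal_C5 :: 'k::field poly5 set) = ideal_gen (monom ` range edge_exp)"
proof -
  have "{(var i :: 'k poly5) * var (i + 1) | i. True} = monom ` range edge_exp"
    by (auto simp: var_def monom_mult edge_exp_def)
  then show ?thesis
    unfolding edge_ideal_C5_def by simp
qed

lemma prod_list_mem_ideal_gen_edge_power_exps: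
  "set xs \<subseteq> (edge_ideal_C5 :: 'k::field poly5 set) \<Longrightarrow>
     prod_list xs \<in> ideal_gen (monom ` edge_power_exps (length xs))"
proof (induction xs)
  case Nil
  show ?case
    by (simp add: ideal_gen_base monom_0[symmetric])
next
  case (Cons x xs)
  have "x * prod_list xs \<in> ideal_gen {s * t | s t. s \<in> monom ` range edge_exp \<and>
                                     t \<in> monom ` edge_power_exps (length xs)}"
    using Cons by (intro ideal_gen_mult) (auto simp: edge_ideal_C5_eq)
  also have "\<dots> \<subseteq> ideal_gen (monom ` edge_power_exps (Suc (length xs)))"
  proof (intro ideal_gen_subset subsetI)
    fix m assume "m \<in> {s * t | s t. s \<in> monom ` range edge_exp \<and>
                                     t \<in> monom ` edge_power_exps (length xs)}"
    then obtain j g where "g \<in> edge_power_exps (length xs)" "m = monom (edge_exp j + g)"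
      by (auto simp: monom_mult)
    then show "m \<in> ideal_gen (monom ` edge_power_exps (Suc (length xs)))"
      by (intro ideal_gen_base imageI) auto
  qed
  finally show ?case
    by simp
qed

lemma edge_power_exps_prod_list:
  assumes "g \<in> edge_power_exps q"
  shows "\<exists>xs. length xs = q \<and> set xs \<subseteq> (edge_ideal_C5 :: 'k::field poly5 set) \<and>
           prod_list xs = monom g"
  using assms
proof (induction q arbitrary: g)
  case 0
  then show ?case
    by (simp add: monom_0)
next
  case (Suc q)
  then obtain j h where g: "g = edge_exp j + h" "h \<in> edge_power_exps q"
    by auto
  obtain xs where xs: "length xs = q" "set xs \<subseteq> (edge_ideal_C5 :: 'k poly5 set)"
    "prod_list xs = monom h"
    using Suc.IH[OF g(2)] by blast
  have "(monom (edge_exp j) :: 'k poly5) \<in> edge_ideal_C5"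
    unfolding edge_ideal_C5_eq by (rule ideal_gen_base) simp
  with xs g(1) show ?case
    by (intro exI[of _ "monom (edge_exp j) # xs"]) (simp add: monom_mult)
qed

lemma ideal_pow_edge_ideal_C5:
  "ideal_pow (edge_ideal_C5 :: 'k::field poly5 set) q = ideal_gen (monom ` edge_power_exps q)"
proof
  show "ideal_pow edge_ideal_C5 q \<subseteq> ideal_gen (monom ` edge_power_exps q)"
    unfolding ideal_pow_def
    using prod_list_mem_ideal_gen_edge_power_exps by (intro ideal_gen_subset) blast
  have "monom ` edge_power_exps q \<subseteq> ideal_pow (edge_ideal_C5 :: 'k poly5 set) q"
  proof
    fix m :: "'k poly5" assume "m \<in> monom ` edge_power_exps q"
    then obtain g xs where "m = monom g" "length xs = q"
      "set xs \<subseteq> (edge_ideal_C5 :: 'k poly5 set)" "prod_list xs = monom g"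
      using edge_power_exps_prod_list by blast
    then show "m \<in> ideal_pow edge_ideal_C5 q"
      unfolding ideal_pow_def by (intro ideal_gen_base CollectI exI[of _ xs]) simp
  qed
  then show "ideal_gen (monom ` edge_power_exps q) \<subseteq> ideal_pow (edge_ideal_C5 :: 'k poly5 set) q"
    unfolding ideal_pow_def by (rule ideal_gen_subset)
qed

lemma min_mon_gens_ideal_pow_edge_ideal_C5:
  "min_mon_gens (ideal_pow (edge_ideal_C5 :: 'k::field poly5 set) q) = edge_power_exps q"
  unfolding ideal_pow_edge_ideal_C5
  by (rule min_mon_gens_monomial_ideal)
    (auto simp: edge_power_exps_eq ivec_eq_iff[symmetric] ivec_le_iff[symmetric]
      dest: polytope_point_antichain)

lemma edge_power_exps_exchange:
  assumes "2 \<le> q" "a \<in> edge_power_exps q" "u \<in> edge_power_exps q"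
    and "order_key (int q) (ivec a) < order_key (int q) (ivec u)"
  shows "\<exists>v. Poly_Mapping.lookup u v < Poly_Mapping.lookup a v \<and>
    (\<exists>b\<in>edge_power_exps q. order_key (int q) (ivec b) < order_key (int q) (ivec u) \<and>
       Poly_Mapping.lookup b \<le> Poly_Mapping.lookup (u + Poly_Mapping.single v 1))"
proof -
  obtain v w where less: "ivec u v < ivec a v"
    and point: "polytope_point (int q) (ivec u + unit_vec v - unit_vec w)"
    and key_less:
      "order_key (int q) (ivec u + unit_vec v - unit_vec w) < order_key (int q) (ivec u)"
    using polytope_point_exchange[of "int q" "ivec a" "ivec u"] assms
    by (auto simp: edge_power_exps_eq)
  define b where "b = u + Poly_Mapping.single v 1 - Poly_Mapping.single w 1"
  have "unit_vec w \<le> ivec u + unit_vec v"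
    using point by (auto simp: polytope_point_def le_fun_def)
  then have "ivec b = ivec u + unit_vec v - unit_vec w"
    unfolding b_def by (subst ivec_diff) (simp_all only: ivec_add ivec_single)
  with point key_less have "b \<in> edge_power_exps q"
    and "order_key (int q) (ivec b) < order_key (int q) (ivec u)"
    by (simp_all add: edge_power_exps_eq)
  moreover have "Poly_Mapping.lookup b \<le> Poly_Mapping.lookup (u + Poly_Mapping.single v 1)"
    unfolding b_def by (simp add: le_fun_def lookup_minus)
  moreover have "Poly_Mapping.lookup u v < Poly_Mapping.lookup a v"
    using less by (simp add: ivec_def)
  ultimately show ?thesis
    by blast
qed

theorem proposition4p2:
  fixes q :: nat
  assumes "q \<ge> 2"
  shows "has_linear_quotients (ideal_pow (edge_ideal_C5 :: 'k::field poly5 set) q)"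
proof (rule has_linear_quotients_if_exchange[where key = "order_key (int q) \<circ> ivec"])
  show "min_mon_gens (ideal_pow (edge_ideal_C5 :: 'k poly5 set) q) = edge_power_exps q"
    by (rule min_mon_gens_ideal_pow_edge_ideal_C5)
  show "finite (edge_power_exps q)"
    by (rule finite_edge_power_exps)
  show "inj_on (order_key (int q) \<circ> ivec) (edge_power_exps q)"
    using inj_on_order_key[of "int q"] ivec_eq_iff
    by (auto simp: inj_on_def edge_power_exps_eq)
qed (use edge_power_exps_exchange[OF assms] in simp)

end
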